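(* Let $\Omega_1,\Omega_2\subset\mathbb{R}^n$ be nearly convex sets with $\operatorname{ri}\Omega_1\cap\operatorname{ri}\Omega_2\neq\emptyset$. Then $\sigma_{\Omega_1\cap\Omega_2}=\sigma_{\Omega_1}\,\square\,\sigma_{\Omega_2}$. Moreover, for every $v\in\mathbb{R}^n$ with $\sigma_{\Omega_1\cap\Omega_2}(v)\in\mathbb{R}$ there exist $v_1,v_2\in\mathbb{R}^n$ with $v=v_1+v_2$ and $\sigma_{\Omega_1\cap\Omega_2}(v)=\sigma_{\Omega_1}(v_1)+\sigma_{\Omega_2}(v_2)$.
   Context: A set $\Omega$ is nearly convex if there is a convex set $C$ with $C\subset\Omega\subset\overline{C}$; $\operatorname{ri}\Omega=\{a\in\Omega:\exists\delta>0,\ B(a;\delta)\cap\operatorname{aff}\Omega\subset\Omega\}$. Support function: $\sigma_\Omega(v)=\sup\{\langle v,x\rangle:x\in\Omega\}$. Infimal convolution: $(g\square h)(x)=\inf\{g(x_1)+h(x_2):x_1+x_2=x\}$. *)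

theory Defs
  imports "HOL-Analysis.Analysis"
begin

definition nearly_convex :: "'a::euclidean_space set \<Rightarrow> bool" where
  "nearly_convex \<Omega> \<longleftrightarrow> (\<exists>C. convex C \<and> C \<subseteq> \<Omega> \<and> \<Omega> \<subseteq> closure C)"

definition support_fun :: "'a::euclidean_space set \<Rightarrow> 'a \<Rightarrow> ereal" where
  "support_fun \<Omega> v = (SUP x\<in>\<Omega>. ereal (inner v x))"

definition infconv :: "('a::euclidean_space \<Rightarrow> ereal) \<Rightarrow> ('a \<Rightarrow> ereal) \<Rightarrow> 'a \<Rightarrow> ereal" where
  "infconv g h x = (INF p\<in>{p. fst p + snd p = x}. g (fst p) + h (snd p))"

end

theory Submission
  imports Defs
begin

text \<open>
  Support functions do not see the passage to the closure, and \<open>ri \<Omega> \<subseteq> ri C\<close> whenever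
  \<open>C \<subseteq> \<Omega> \<subseteq> cl C\<close> with \<open>C\<close> convex, so both sets may be assumed convex. The inequality
  \<open>\<sigma>(\<Omega>1 \<inter> \<Omega>2) \<le> \<sigma>(\<Omega>1) \<box> \<sigma>(\<Omega>2)\<close> is immediate. Conversely, if \<open>\<langle>v, x\<rangle> \<le> \<alpha>\<close> on
  \<open>\<Omega>1 \<inter> \<Omega>2\<close>, separate the origin from the convex set
  \<open>{(x1 - x2, \<langle>v, x1\<rangle> - t) | x1 \<in> \<Omega>1, x2 \<in> \<Omega>2, t > \<alpha>}\<close> by a hyperplane with normal
  \<open>(p, q)\<close> lying in the affine hull of that set and the origin. A common relative interior
  point rules out \<open>q = 0\<close>, and then \<open>w = p / (-q)\<close> gives \<open>\<sigma>(\<Omega>1)(v - w) + \<sigma>(\<Omega>2)(w) \<le> \<alpha>\<close>.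
\<close>

lemma support_fun_closure: "support_fun (closure S) = support_fun S"
proof
  fix v
  show "support_fun (closure S) v = support_fun S v"
  proof (rule antisym)
    show "support_fun S v \<le> support_fun (closure S) v"
      unfolding support_fun_def by (rule SUP_subset_mono[OF closure_subset]) simp
  next
    have upper: "ereal (inner v x) \<le> support_fun S v" if "x \<in> S" for x
      unfolding support_fun_def using that by (rule SUP_upper)
    show "support_fun (closure S) v \<le> support_fun S v"
    proof (cases "support_fun S v")
      case (real r)
      have "S \<subseteq> {x. inner v x \<le> r}"
        using upper real by fastforce
      then have "closure S \<subseteq> {x. inner v x \<le> r}"
        by (rule closure_minimal) (simp add: closed_halfspace_le)
      then have "support_fun (closure S) v \<le> ereal r"
        unfolding support_fun_def by (intro SUP_least) auto
      then show ?thesis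
        using real by simp
    next
      case PInf
      then show ?thesis by simp
    next
      case MInf
      then have "S = {}"
        using upper by fastforce
      then show ?thesis by simp
    qed
  qed
qed

lemma support_fun_eq_if_subset_closure:
  assumes "C \<subseteq> S" "S \<subseteq> closure C"
  shows "support_fun S = support_fun C"
proof
  fix v
  have "support_fun C v \<le> support_fun S v" "support_fun S v \<le> support_fun (closure C) v"
    unfolding support_fun_def using assms by (auto intro: SUP_subset_mono)
  then show "support_fun S v = support_fun C v"
    by (simp add: support_fun_closure)
qed

lemma rel_interior_subset_if_subset_closure:
  fixes C :: "'a::euclidean_space set"
  assumes "convex C" "C \<subseteq> S" "S \<subseteq> closure C"
  shows "rel_interior S \<subseteq> rel_interior C"
proof -
  have "affine hull S = affine hull (closure C)"
    using hull_mono[OF assms(2), of affine] hull_mono[OF assms(3), of affine] by simp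
  then have "rel_interior S \<subseteq> rel_interior (closure C)"
    using rel_interior_mono[OF assms(3)] by simp
  then show ?thesis
    by (simp add: convex_rel_interior_closure[OF assms(1)])
qed

lemma support_fun_Int_le_add:
  "support_fun (S \<inter> T) (v + w) \<le> support_fun S v + support_fun T w"
  unfolding support_fun_def
proof (rule SUP_least)
  fix x assume x: "x \<in> S \<inter> T"
  have "ereal (inner (v + w) x) = ereal (inner v x) + ereal (inner w x)"
    by (simp add: inner_add_left)
  also have "\<dots> \<le> (SUP x\<in>S. ereal (inner v x)) + (SUP x\<in>T. ereal (inner w x))"
    using x by (intro add_mono) (auto intro: SUP_upper)
  finally show "ereal (inner (v + w) x) \<le> \<dots>" .
qed

lemma convex_inner_eq_if_min_at_rel_interior:
  fixes C :: "'a::euclidean_space set"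
  assumes "convex C" "x0 \<in> rel_interior C"
    and min: "\<And>x. x \<in> C \<Longrightarrow> inner p x0 \<le> inner p x"
    and "x \<in> C"
  shows "inner p x = inner p x0"
proof -
  obtain e where e: "e > 1" "(1 - e) *\<^sub>R x + e *\<^sub>R x0 \<in> C"
    using convex_rel_interior_iff[OF assms(1)] assms(2,4) by blast
  have "inner p x0 \<le> (1 - e) * inner p x + e * inner p x0"
    using min[OF e(2)] by (simp add: inner_add_right)
  then have "(e - 1) * inner p x \<le> (e - 1) * inner p x0"
    by (simp add: algebra_simps)
  with e(1) min[OF assms(4)] show ?thesis by simp
qed

lemma convex_inner_eq_if_separating_rel_interior:
  fixes C1 C2 :: "'a::euclidean_space set"
  assumes "convex C1" "convex C2" "x0 \<in> rel_interior C1" "x0 \<in> rel_interior C2"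
    and sep: "\<And>x1 x2. x1 \<in> C1 \<Longrightarrow> x2 \<in> C2 \<Longrightarrow> inner p x2 \<le> inner p x1"
    and "x1 \<in> C1" "x2 \<in> C2"
  shows "inner p x1 = inner p x2"
proof -
  have "x0 \<in> C1" "x0 \<in> C2"
    using assms(3,4) rel_interior_subset by auto
  then have "\<And>x. x \<in> C1 \<Longrightarrow> inner p x0 \<le> inner p x"
    and "\<And>x. x \<in> C2 \<Longrightarrow> inner (- p) x0 \<le> inner (- p) x"
    using sep[OF _ \<open>x0 \<in> C2\<close>] sep[OF \<open>x0 \<in> C1\<close>] by simp_all
  then have "inner p x1 = inner p x0" "inner (- p) x2 = inner (- p) x0"
    using convex_inner_eq_if_min_at_rel_interior[OF assms(1,3) _ assms(6)]
      convex_inner_eq_if_min_at_rel_interior[OF assms(2,4) _ assms(7)] by blast+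
  then show ?thesis by simp
qed

lemma convex_Int_inner_bound_separation:
  fixes C1 C2 :: "'a::euclidean_space set"
  assumes c1: "convex C1" and c2: "convex C2"
    and r1: "x0 \<in> rel_interior C1" and r2: "x0 \<in> rel_interior C2"
    and bound: "\<And>x. x \<in> C1 \<inter> C2 \<Longrightarrow> inner v x \<le> \<alpha>"
  obtains p q where "q < 0"
    and "\<And>x1 x2 t. x1 \<in> C1 \<Longrightarrow> x2 \<in> C2 \<Longrightarrow> \<alpha> < t \<Longrightarrow>
           0 \<le> inner p (x1 - x2) + q * (inner v x1 - t)"
proof -
  have x01: "x0 \<in> C1" and x02: "x0 \<in> C2" using r1 r2 rel_interior_subset by auto
  define f :: "('a \<times> 'a) \<times> real \<Rightarrow> 'a \<times> real"
    where "f z = (fst (fst z) - snd (fst z), inner v (fst (fst z)) - snd z)" for z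
  define K where "K = f ` ((C1 \<times> C2) \<times> {\<alpha><..})"
  have "linear f"
    unfolding f_def by (auto intro!: linearI simp: algebra_simps)
  then have "convex K"
    unfolding K_def using c1 c2 by (intro convex_linear_image convex_Times) auto
  moreover have "K \<noteq> {}"
    unfolding K_def using x01 x02 by auto
  moreover have "0 \<notin> K"
    using bound by (force simp: K_def f_def zero_prod_def)
  ultimately obtain a b where aff: "a \<in> affine hull (insert 0 K)" and "a \<noteq> 0"
    and "0 \<le> b" and sep: "\<And>k. k \<in> K \<Longrightarrow> a \<bullet> k \<ge> b"
    using separating_hyperplane_set_point_inaff[of K 0] by auto
  obtain p q where a: "a = (p, q)" by fastforce
  have H: "0 \<le> inner p (x1 - x2) + q * (inner v x1 - t)"
    if "x1 \<in> C1" "x2 \<in> C2" "t > \<alpha>" for x1 x2 t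
    using sep[of "f ((x1, x2), t)"] that \<open>0 \<le> b\<close> by (force simp: K_def f_def a)
  have "q \<le> 0"
  proof (rule ccontr)
    assume "\<not> q \<le> 0"
    moreover have "\<alpha> < \<bar>\<alpha>\<bar> + \<bar>inner v x0\<bar> + 1" "inner v x0 < \<bar>\<alpha>\<bar> + \<bar>inner v x0\<bar> + 1"
      by linarith+
    ultimately show False
      using H[OF x01 x02, of "\<bar>\<alpha>\<bar> + \<bar>inner v x0\<bar> + 1"] by (simp add: zero_le_mult_iff)
  qed
  moreover have "q \<noteq> 0"
  proof
    assume "q = 0"
    then have "inner p x2 \<le> inner p x1" if "x1 \<in> C1" "x2 \<in> C2" for x1 x2
      using H[OF that, of "\<alpha> + 1"] by (simp add: inner_diff_right)
    then have "inner p x1 = inner p x2" if "x1 \<in> C1" "x2 \<in> C2" for x1 x2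
      by (rule convex_inner_eq_if_separating_rel_interior[OF c1 c2 r1 r2 _ that])
    then have "K \<subseteq> {z. a \<bullet> z = 0}"
      unfolding K_def f_def a \<open>q = 0\<close> by (auto simp: inner_diff_right)
    then have "affine hull (insert 0 K) \<subseteq> {z. a \<bullet> z = 0}"
      by (intro hull_minimal) (auto simp: affine_hyperplane)
    with aff \<open>a \<noteq> 0\<close> show False by auto
  qed
  ultimately show ?thesis
    by (intro that[OF _ H]) simp_all
qed

lemma convex_Int_inner_bound_split:
  fixes C1 C2 :: "'a::euclidean_space set"
  assumes "convex C1" "convex C2" "x0 \<in> rel_interior C1" "x0 \<in> rel_interior C2"
    and "\<And>x. x \<in> C1 \<inter> C2 \<Longrightarrow> inner v x \<le> \<alpha>"
  obtains w where "\<And>x1 x2. x1 \<in> C1 \<Longrightarrow> x2 \<in> C2 \<Longrightarrow> inner (v - w) x1 + inner w x2 \<le> \<alpha>"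
proof -
  obtain p q where q: "q < 0"
    and H: "\<And>x1 x2 t. x1 \<in> C1 \<Longrightarrow> x2 \<in> C2 \<Longrightarrow> \<alpha> < t \<Longrightarrow>
              0 \<le> inner p (x1 - x2) + q * (inner v x1 - t)"
    using convex_Int_inner_bound_separation[OF assms] by metis
  show ?thesis
  proof
    fix x1 x2 assume x1: "x1 \<in> C1" and x2: "x2 \<in> C2"
    have "inner v x1 - \<alpha> \<le> inner p (x1 - x2) / (- q) + t" if "t > 0" for t
      using H[OF x1 x2, of "\<alpha> + t"] that q by (simp add: field_simps)
    then have "inner v x1 - \<alpha> \<le> inner ((1 / - q) *\<^sub>R p) (x1 - x2)"
      by (simp add: field_le_epsilon)
    then show "inner (v - (1 / - q) *\<^sub>R p) x1 + inner ((1 / - q) *\<^sub>R p) x2 \<le> \<alpha>"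
      by (simp only: inner_diff_left inner_diff_right)
  qed
qed

lemma convex_support_fun_Int_split:
  fixes C1 C2 :: "'a::euclidean_space set"
  assumes "convex C1" "convex C2" "rel_interior C1 \<inter> rel_interior C2 \<noteq> {}"
    and fin: "\<bar>support_fun (C1 \<inter> C2) v\<bar> \<noteq> \<infinity>"
  obtains v1 v2 where "v = v1 + v2"
    and "support_fun (C1 \<inter> C2) v = support_fun C1 v1 + support_fun C2 v2"
proof -
  obtain x0 where r1: "x0 \<in> rel_interior C1" and r2: "x0 \<in> rel_interior C2"
    using assms(3) by blast
  from fin obtain \<alpha> where \<alpha>: "support_fun (C1 \<inter> C2) v = ereal \<alpha>"
    by (cases "support_fun (C1 \<inter> C2) v") auto
  have "inner v x \<le> \<alpha>" if "x \<in> C1 \<inter> C2" for x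
    using SUP_upper[OF that, of "\<lambda>x. ereal (inner v x)"] \<alpha> by (simp add: support_fun_def)
  then obtain w where w: "\<And>x1 x2. x1 \<in> C1 \<Longrightarrow> x2 \<in> C2 \<Longrightarrow> inner (v - w) x1 + inner w x2 \<le> \<alpha>"
    using convex_Int_inner_bound_split[OF assms(1,2) r1 r2] by blast
  have "x0 \<in> C1" "x0 \<in> C2"
    using r1 r2 rel_interior_subset by auto
  text \<open>Bounding the two suprema one after the other keeps all values finite.\<close>
  have "support_fun C1 (v - w) \<le> ereal (\<alpha> - inner w x2)" if "x2 \<in> C2" for x2
    unfolding support_fun_def using w[OF _ that] by (intro SUP_least) (simp add: le_diff_eq)
  moreover have "ereal (inner (v - w) x0) \<le> support_fun C1 (v - w)"
    unfolding support_fun_def using \<open>x0 \<in> C1\<close> by (rule SUP_upper)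
  ultimately obtain c where c: "support_fun C1 (v - w) = ereal c"
    and "\<And>x2. x2 \<in> C2 \<Longrightarrow> inner w x2 \<le> \<alpha> - c"
    using \<open>x0 \<in> C2\<close> by (cases "support_fun C1 (v - w)") force+
  then have "support_fun C2 w \<le> ereal (\<alpha> - c)"
    unfolding support_fun_def by (intro SUP_least) simp
  then have "ereal c + support_fun C2 w \<le> ereal c + ereal (\<alpha> - c)"
    by (rule add_left_mono)
  then have "support_fun C1 (v - w) + support_fun C2 w \<le> support_fun (C1 \<inter> C2) v"
    using c \<alpha> by simp
  moreover have "support_fun (C1 \<inter> C2) v \<le> support_fun C1 (v - w) + support_fun C2 w"
    using support_fun_Int_le_add[of C1 C2 "v - w" w] by simp
  ultimately show ?thesis
    using that[of "v - w" w] by simp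
qed

lemma convex_support_fun_Int_eq_infconv:
  fixes C1 C2 :: "'a::euclidean_space set"
  assumes "convex C1" "convex C2" "rel_interior C1 \<inter> rel_interior C2 \<noteq> {}"
  shows "support_fun (C1 \<inter> C2) = infconv (support_fun C1) (support_fun C2)"
proof
  fix v
  show "support_fun (C1 \<inter> C2) v = infconv (support_fun C1) (support_fun C2) v"
    unfolding infconv_def
  proof (rule antisym)
    show "support_fun (C1 \<inter> C2) v
        \<le> (INF p\<in>{p. fst p + snd p = v}. support_fun C1 (fst p) + support_fun C2 (snd p))"
      using support_fun_Int_le_add[of C1 C2] by (auto intro: INF_greatest)
  next
    have "C1 \<inter> C2 \<noteq> {}"
      using assms(3) rel_interior_subset by blast
    then have "support_fun (C1 \<inter> C2) v \<noteq> -\<infinity>"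
      unfolding support_fun_def by (auto simp: SUP_eq_iff)
    then consider "support_fun (C1 \<inter> C2) v = \<infinity>" | "\<bar>support_fun (C1 \<inter> C2) v\<bar> \<noteq> \<infinity>"
      by fastforce
    then show "(INF p\<in>{p. fst p + snd p = v}. support_fun C1 (fst p) + support_fun C2 (snd p))
        \<le> support_fun (C1 \<inter> C2) v"
    proof cases
      case 2
      then obtain v1 v2 where "v = v1 + v2"
        and "support_fun (C1 \<inter> C2) v = support_fun C1 v1 + support_fun C2 v2"
        using convex_support_fun_Int_split[OF assms 2] by blast
      then show ?thesis
        by (metis (mono_tags, lifting) INF_lower fst_conv mem_Collect_eq snd_conv)
    qed simp
  qed
qed

theorem theorem6p1:
  fixes \<Omega>1 \<Omega>2 :: "'a::euclidean_space set"
  assumes "nearly_convex \<Omega>1" and "nearly_convex \<Omega>2"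
    and "rel_interior \<Omega>1 \<inter> rel_interior \<Omega>2 \<noteq> {}"
  shows "support_fun (\<Omega>1 \<inter> \<Omega>2) = infconv (support_fun \<Omega>1) (support_fun \<Omega>2) \<and>
         (\<forall>v. \<bar>support_fun (\<Omega>1 \<inter> \<Omega>2) v\<bar> \<noteq> \<infinity> \<longrightarrow>
           (\<exists>v1 v2. v = v1 + v2 \<and>
             support_fun (\<Omega>1 \<inter> \<Omega>2) v = support_fun \<Omega>1 v1 + support_fun \<Omega>2 v2))"
proof -
  obtain C1 where C1: "convex C1" "C1 \<subseteq> \<Omega>1" "\<Omega>1 \<subseteq> closure C1"
    using assms(1) unfolding nearly_convex_def by blast
  obtain C2 where C2: "convex C2" "C2 \<subseteq> \<Omega>2" "\<Omega>2 \<subseteq> closure C2"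
    using assms(2) unfolding nearly_convex_def by blast
  have ri: "rel_interior C1 \<inter> rel_interior C2 \<noteq> {}"
    using assms(3) rel_interior_subset_if_subset_closure[OF C1]
      rel_interior_subset_if_subset_closure[OF C2] by blast
  have "closure (C1 \<inter> C2) = closure C1 \<inter> closure C2"
    using closure_Int_convex[OF C1(1) C2(1) ri] .
  then have "support_fun (\<Omega>1 \<inter> \<Omega>2) = support_fun (C1 \<inter> C2)"
    using C1 C2 by (intro support_fun_eq_if_subset_closure) auto
  moreover have "support_fun \<Omega>1 = support_fun C1" "support_fun \<Omega>2 = support_fun C2"
    using support_fun_eq_if_subset_closure C1 C2 by auto
  ultimately show ?thesis
    using convex_support_fun_Int_eq_infconv[OF C1(1) C2(1) ri]
      convex_support_fun_Int_split[OF C1(1) C2(1) ri] by metis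
qed

end
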